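(* Let $k\in\mathbb{N}$ with $\gcd(k,6)=1$, let $h$ be an integer with $\gcd(h,k)=1$, and let $h'$ be an integer with $hh'\equiv-1\pmod{k}$ and $6\mid h'$. Then $$\frac{\omega_{6h,k}\,\omega_{2h,k}\,\omega_{h,k}}{\omega_{3h,k}}=\exp\!\left(- \frac{2\pi i}{36k} \left(-9k+9k^2+h (-9+9k^2) + h'(2-2k^2) \right)\right)$$ and $$\frac{\omega_{3h,k}\,\omega_{2h,k}\,\omega_{h,k}}{\omega_{6h,k}^3} =\exp\!\left(\frac{2\pi i}{18k} \left(9h ( k^2-1) + h'(k^2-1) \right)\right).$$
   Context: For coprime integers $h$ and $K\ge1$, $\omega_{h,K}=\exp(\pi i\, s(h,K))$, where $s(h,K)=\sum_{r=1}^{K-1}\frac{r}{K}\left(\frac{hr}{K}-\lfloor \frac{hr}{K}\rfloor-\frac12\right)$ is the Dedekind sum (the multiplier of the Dedekind eta function). *)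

theory Defs
  imports "HOL-Analysis.Analysis" "HOL-Number_Theory.Cong"
begin

definition dedekind_sum :: "int \<Rightarrow> int \<Rightarrow> real" where
  "dedekind_sum h K = (\<Sum>r\<in>{1..K-1}.
     (of_int r / of_int K) * (of_int (h*r) / of_int K - of_int \<lfloor>of_int (h*r) / (of_int K :: real)\<rfloor> - 1/2))"

definition omega :: "int \<Rightarrow> int \<Rightarrow> complex" where
  "omega h K = exp (complex_of_real pi * \<i> * complex_of_real (dedekind_sum h K))"

end

theory Submission
  imports Defs "HOL-Number_Theory.Modular_Inverse"
begin

(*
  Write s(a,K) = A(a)/K^2 - (K-1)/4 with the integer A(a) = sum_{r=1}^{K-1} r (a r mod K).
  Each identity then says that a certain integer combination T of A(h), A(2h), A(3h), A(6h)
  is divisible by 36 K^2 (resp. 18 K^2), i.e. that the two exponents differ by an even integer.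
  Divisibility by K^2 comes from the congruence 12 A(a) = K (a - a') (mod K^2) for
  a a' = -1 (mod K), applied to the pairs (c h, h'/c) for c dividing 6.  Divisibility by 36
  (resp. 18) comes from K^2 = 1 (mod 24) together with A(a) + A(2a) = A(b) + A(2b) (mod 2),
  which follows from the symmetry r -> K - r.
*)

definition dedekind_sum_num :: "int \<Rightarrow> int \<Rightarrow> int" where
  "dedekind_sum_num a K = (\<Sum>r\<in>{1..<K}. r * (a * r mod K))"

lemma double_sum_Ico_int:
  fixes K :: int assumes "1 \<le> K"
  shows "2 * (\<Sum>r\<in>{1..<K}. r) = (K - 1) * K"
  using assms
proof (induction K rule: int_ge_induct)
  case (step i)
  have "{1..<i + 1} = insert i {1..<i}" using step.hyps by auto
  then show ?case using step.IH by (simp add: algebra_simps)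
qed simp

lemma six_sum_squares_Ico_int:
  fixes K :: int assumes "1 \<le> K"
  shows "6 * (\<Sum>r\<in>{1..<K}. r^2) = (K - 1) * K * (2 * K - 1)"
  using assms
proof (induction K rule: int_ge_induct)
  case (step i)
  have "{1..<i + 1} = insert i {1..<i}" using step.hyps by auto
  then show ?case using step.IH by (simp add: algebra_simps power2_eq_square)
qed simp

lemma dedekind_sum_eq_num:
  fixes a K :: int assumes K: "K > 0"
  shows "dedekind_sum a K = of_int (dedekind_sum_num a K) / of_int K ^ 2 - (of_int K - 1) / 4"
proof -
  have term_eq: "(of_int r / of_int K :: real) * (of_int (a * r) / of_int K - of_int \<lfloor>of_int (a * r) / (of_int K :: real)\<rfloor> - 1/2)
      = of_int (r * (a * r mod K)) / of_int K ^ 2 - of_int r / (2 * of_int K)" for r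
  proof -
    have "of_int (a * r) = (of_int K * of_int (a * r div K) + of_int (a * r mod K) :: real)"
      by (metis of_int_add of_int_mult div_mult_mod_eq mult.commute)
    then have frac: "of_int (a * r) / of_int K - of_int \<lfloor>of_int (a * r) / (of_int K :: real)\<rfloor>
        = (of_int (a * r mod K) / of_int K :: real)"
      unfolding floor_divide_of_int_eq using K by (simp add: field_simps)
    show ?thesis
      unfolding frac using K by (simp add: field_simps power2_eq_square)
  qed
  have Icc_eq_Ico: "{1..K-1} = {1..<K}" by auto
  have "dedekind_sum a K
      = (\<Sum>r\<in>{1..<K}. of_int (r * (a * r mod K)) / of_int K ^ 2 - of_int r / (2 * of_int K))"
    unfolding dedekind_sum_def Icc_eq_Ico term_eq ..
  also have "\<dots> = of_int (dedekind_sum_num a K) / of_int K ^ 2 - of_int (\<Sum>r\<in>{1..<K}. r) / (2 * of_int K)"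
    by (simp add: dedekind_sum_num_def sum_subtractf sum_divide_distrib)
  also have "of_int (\<Sum>r\<in>{1..<K}. r) / (2 * of_int K) = ((of_int K - 1) / 4 :: real)"
  proof -
    have "2 * of_int (\<Sum>r\<in>{1..<K}. r) = ((of_int K - 1) * of_int K :: real)"
      using arg_cong[where f = "of_int :: int \<Rightarrow> real", OF double_sum_Ico_int[of K]] K by simp
    then show ?thesis
      using K by (simp add: field_simps)
  qed
  finally show ?thesis .
qed

lemma mult_diff_mod_self:
  fixes a x K :: int assumes "\<not> K dvd a * x"
  shows "a * (K - x) mod K = K - a * x mod K"
proof -
  have "a * (K - x) mod K = (- (a * x)) mod K"
    by (metis mod_mult_self2 mult.commute right_diff_distrib' uminus_add_conv_diff)
  also have "\<dots> = K - a * x mod K"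
    using assms by (simp add: zmod_zminus1_eq_if dvd_eq_mod_eq_0)
  finally show ?thesis .
qed

lemma dedekind_sum_num_cong:
  fixes a a' K :: int
  assumes K: "K > 0" and coprime: "coprime a K" and inverse: "[a * a' = -1] (mod K)"
  shows "K^2 dvd 12 * dedekind_sum_num a K - K * (a - a')"
proof -
  define q where "q r = a * r div K" for r
  define S where "S = (\<Sum>r\<in>{1..<K}. r^2)"
  define Q where "Q = (\<Sum>r\<in>{1..<K}. r * q r)"
  define W where "W = (\<Sum>r\<in>{1..<K}. q r ^ 2)"
  have rem: "a * r mod K = a * r - K * q r" for r
    unfolding q_def by (metis minus_mult_div_eq_mod)
  have "(\<Sum>r\<in>{1..<K}. (a * r mod K)^2) = S"
    unfolding S_def by (rule sum.reindex_bij_betw[OF bij_betw_int_remainders_mult[OF coprime]])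
  then have "S = (\<Sum>r\<in>{1..<K}. (a * r mod K)^2)" ..
  also have "\<dots> = (\<Sum>r\<in>{1..<K}. a^2 * r^2 - 2 * a * K * (r * q r) + K^2 * q r ^ 2)"
    unfolding rem by (intro sum.cong refl) (simp add: power2_eq_square algebra_simps)
  also have "\<dots> = a^2 * S - 2 * a * K * Q + K^2 * W"
    by (simp add: S_def Q_def W_def sum.distrib sum_subtractf sum_distrib_left)
  finally have squares: "S = a^2 * S - 2 * a * K * Q + K^2 * W" .
  have "dedekind_sum_num a K = (\<Sum>r\<in>{1..<K}. a * r^2 - K * (r * q r))"
    unfolding dedekind_sum_num_def rem
    by (intro sum.cong refl) (simp add: power2_eq_square algebra_simps)
  also have "\<dots> = a * S - K * Q"
    by (simp add: S_def Q_def sum_subtractf sum_distrib_left)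
  finally have num: "dedekind_sum_num a K = a * S - K * Q" .
  have six_S: "6 * S = (K - 1) * K * (2 * K - 1)"
    unfolding S_def using six_sum_squares_Ico_int K by simp
  obtain e where e: "a * a' = K * e - 1"
    using inverse by (metis cong_iff_dvd_diff diff_minus_eq_add dvd_def eq_diff_eq)
  have "a * (12 * dedekind_sum_num a K - K * (a - a')) = K^2 * ((a^2 + 1) * (2 * K - 3) + e - 6 * W)"
    using squares num six_S e by algebra
  then have "K^2 dvd a * (12 * dedekind_sum_num a K - K * (a - a'))"
    by simp
  moreover have "coprime (K^2) a"
    using coprime by (simp add: coprime_commute)
  ultimately show ?thesis
    by (simp add: coprime_dvd_mult_right_iff)
qed

lemma sum_mult_mod_reflect:
  fixes a K :: int and f :: "int \<Rightarrow> int"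
  assumes coprime: "coprime a K" and symmetric: "\<And>x. x \<in> {1..<K} \<Longrightarrow> f (K - x) = f x"
  shows "2 * (\<Sum>r\<in>{1..<K}. r * f (a * r mod K)) = K * (\<Sum>x\<in>{1..<K}. f x)"
proof -
  note bij = bij_betw_int_remainders_mult[OF coprime]
  have reflect: "bij_betw (\<lambda>r. K - r) {1..<K} {1..<K}"
    by (rule bij_betwI[where g = "\<lambda>r. K - r"]) auto
  define S where "S = (\<Sum>r\<in>{1..<K}. r * f (a * r mod K))"
  have "S = (\<Sum>r\<in>{1..<K}. (K - r) * f (a * (K - r) mod K))"
    unfolding S_def using sum.reindex_bij_betw[OF reflect, of "\<lambda>r. r * f (a * r mod K)"] by simp
  also have "\<dots> = (\<Sum>r\<in>{1..<K}. (K - r) * f (a * r mod K))"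
  proof (rule sum.cong)
    fix r assume r: "r \<in> {1..<K}"
    then have "a * r mod K \<in> {1..<K}"
      using bij by (auto simp: bij_betw_def)
    then show "(K - r) * f (a * (K - r) mod K) = (K - r) * f (a * r mod K)"
      by (simp add: mult_diff_mod_self dvd_eq_mod_eq_0 symmetric)
  qed simp
  finally have "2 * S = S + (\<Sum>r\<in>{1..<K}. (K - r) * f (a * r mod K))"
    by simp
  also have "\<dots> = (\<Sum>r\<in>{1..<K}. K * f (a * r mod K))"
    unfolding S_def by (simp add: algebra_simps flip: sum.distrib)
  also have "\<dots> = K * (\<Sum>x\<in>{1..<K}. f x)"
    using sum.reindex_bij_betw[OF bij, of f] by (simp flip: sum_distrib_left)
  finally show ?thesis
    unfolding S_def .
qed

lemma dedekind_sum_num_doubling_parity: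
  fixes a b K :: int
  assumes odd: "odd K" and "coprime a K" and "coprime b K"
  shows "even (dedekind_sum_num a K + dedekind_sum_num (2 * a) K
             + dedekind_sum_num b K + dedekind_sum_num (2 * b) K)"
proof -
  \<comment> \<open>p (c r mod K) is the parity of the r-th summand of A(c) + A(2c); the invariance of p
    under x \<mapsto> K - x makes P c independent of c.\<close>
  define p where "p x = (x + 2 * x mod K) mod 2" for x
  define P where "P c = (\<Sum>r\<in>{1..<K}. r * p (c * r mod K))" for c
  have "p (K - x) = p x" if "x \<in> {1..<K}" for x
  proof -
    have "\<not> K dvd x"
      using that by (auto simp: zdvd_not_zless)
    then have "\<not> K dvd 2 * x"
      using odd by (simp add: coprime_dvd_mult_right_iff coprime_commute)
    then have reflected: "2 * (K - x) mod K = K - 2 * x mod K"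
      by (rule mult_diff_mod_self)
    have "(K - x + (K - y)) mod 2 = (x + y) mod 2" for y :: int
      by presburger
    then show ?thesis
      unfolding p_def reflected .
  qed
  then have P_eq: "2 * P c = K * (\<Sum>x\<in>{1..<K}. p x)" if "coprime c K" for c
    unfolding P_def using sum_mult_mod_reflect[OF that] by blast
  have P_cong: "[dedekind_sum_num c K + dedekind_sum_num (2 * c) K = P c] (mod 2)" for c
  proof -
    have "dedekind_sum_num c K + dedekind_sum_num (2 * c) K
        = (\<Sum>r\<in>{1..<K}. r * (c * r mod K + 2 * (c * r mod K) mod K))"
      unfolding dedekind_sum_num_def
      by (simp add: algebra_simps mod_mult_right_eq flip: sum.distrib)
    also have "[\<dots> = P c] (mod 2)"
      unfolding P_def p_def by (intro cong_sum cong_mult cong_refl) (simp add: cong_def)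
    finally show ?thesis .
  qed
  have "P a = P b"
    using P_eq[of a] P_eq[of b] assms by simp
  then show ?thesis
    using P_cong[of a] P_cong[of b] by (simp add: cong_def) presburger
qed

lemma square_cong_1_mod_24:
  fixes K :: int assumes "coprime K 6"
  shows "24 dvd K^2 - 1"
proof -
  have "odd K" "\<not> 3 dvd K"
    using assms coprime_divisors[of 2 6 K K] coprime_divisors[of 3 6 K K]
    by (auto simp: coprime_commute)
  define r where "r = K mod 24"
  then have "r = 1 \<or> r = 5 \<or> r = 7 \<or> r = 11 \<or> r = 13 \<or> r = 17 \<or> r = 19 \<or> r = 23"
    using \<open>odd K\<close> \<open>\<not> 3 dvd K\<close> by presburger
  then have "24 dvd r^2 - 1"
    by (elim disjE) (simp_all add: power2_eq_square)
  moreover obtain q where "K = 24 * q + r"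
    unfolding r_def by (metis div_mult_mod_eq mult.commute)
  then have "K^2 - 1 = 24 * (24 * q^2 + 2 * q * r) + (r^2 - 1)"
    by (simp add: power2_eq_square algebra_simps)
  ultimately show ?thesis
    by (metis dvd_add dvd_triv_left)
qed

lemma exp_pi_i_eq_if_diff_even:
  assumes "x = 2 * of_int n + y"
  shows "exp (of_real pi * \<i> * of_real x) = exp (of_real pi * \<i> * of_real y)"
proof -
  have "of_real pi * \<i> * of_real x = of_real pi * \<i> * of_real y + \<i> * (of_int n * (of_real pi * 2))"
    using assms by (simp add: algebra_simps)
  then show ?thesis
    by simp
qed

context
  fixes K h m :: int
  assumes K_pos: "K > 0" and coprime_K_6: "coprime K 6" and coprime_h_K: "coprime h K"
    and inverse: "[h * (6 * m) = -1] (mod K)"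
begin

lemma dedekind_sum_num_multiple_cong:
  assumes "c dvd 6" and "c * c' = 6 * m"
  shows "K^2 dvd 12 * dedekind_sum_num (c * h) K - K * (c * h - c')"
proof (rule dedekind_sum_num_cong[OF K_pos])
  have "coprime c K"
    using coprime_divisors[OF assms(1) dvd_refl] coprime_K_6 by (simp add: coprime_commute)
  then show "coprime (c * h) K"
    using coprime_h_K by simp
  have "[h * (c * c') = -1] (mod K)"
    using inverse assms(2) by simp
  then show "[c * h * c' = -1] (mod K)"
    by (simp add: ac_simps)
qed

lemma dedekind_sum_num_multiples_cong:
  shows "K^2 dvd 12 * dedekind_sum_num h K - K * (h - 6 * m)"
    and "K^2 dvd 12 * dedekind_sum_num (2 * h) K - K * (2 * h - 3 * m)"
    and "K^2 dvd 12 * dedekind_sum_num (3 * h) K - K * (3 * h - 2 * m)"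
    and "K^2 dvd 12 * dedekind_sum_num (6 * h) K - K * (6 * h - m)"
  using dedekind_sum_num_multiple_cong[of 1 "6 * m"] dedekind_sum_num_multiple_cong[of 2 "3 * m"]
    dedekind_sum_num_multiple_cong[of 3 "2 * m"] dedekind_sum_num_multiple_cong[of 6 m]
  by simp_all

lemma dedekind_sum_num_parity:
  "even (dedekind_sum_num h K + dedekind_sum_num (2 * h) K
       + dedekind_sum_num (3 * h) K + dedekind_sum_num (6 * h) K)"
proof -
  have "coprime K 2" "coprime K 3"
    using coprime_K_6 coprime_divisors[of K K 2 6] coprime_divisors[of K K 3 6] by auto
  then have "odd K" "coprime (3 * h) K"
    using coprime_h_K by (auto simp: coprime_commute)
  from dedekind_sum_num_doubling_parity[OF this(1) coprime_h_K this(2)]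
  show ?thesis
    by (simp add: ac_simps)
qed

lemma first_exponent_dvd:
  "36 * K^2 dvd 18 * (dedekind_sum_num (6 * h) K + dedekind_sum_num (2 * h) K
                       + dedekind_sum_num h K - dedekind_sum_num (3 * h) K)
                  + K * (K^2 - 1) * (9 * h - 12 * m)"
    (is "_ dvd ?T")
proof -
  define A where "A c = dedekind_sum_num (c * h) K" for c
  have D: "K^2 dvd 12 * A 1 - K * (h - 6 * m)" "K^2 dvd 12 * A 2 - K * (2 * h - 3 * m)"
    "K^2 dvd 12 * A 3 - K * (3 * h - 2 * m)" "K^2 dvd 12 * A 6 - K * (6 * h - m)"
    using dedekind_sum_num_multiples_cong by (simp_all add: A_def)
  have "2 * ?T = 3 * ((12 * A 6 - K * (6 * h - m)) + (12 * A 2 - K * (2 * h - 3 * m))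
                     + (12 * A 1 - K * (h - 6 * m)) - (12 * A 3 - K * (3 * h - 2 * m)))
                + K^2 * (2 * K * (9 * h - 12 * m))"
    by (simp add: A_def algebra_simps power2_eq_square)
  moreover have "K^2 dvd \<dots>"
    by (intro D dvd_add dvd_mult dvd_diff dvd_triv_left)
  moreover have "coprime (K^2) 2"
    using coprime_K_6 coprime_divisors[of K K 2 6] by simp
  ultimately have "K^2 dvd ?T"
    using coprime_dvd_mult_right_iff by (metis (no_types))
  moreover obtain u where u: "A 1 + A 2 + A 3 + A 6 = 2 * u"
    using dedekind_sum_num_parity by (auto simp: A_def elim!: evenE simp del: even_add)
  obtain t where t: "K^2 - 1 = 24 * t"
    using square_cong_1_mod_24[OF coprime_K_6] by (elim dvdE)
  have "?T = 36 * (u - A 3 + 2 * K * t * (3 * h - 4 * m))"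
    using u t by (simp add: A_def) algebra
  then have "36 dvd ?T"
    by simp
  moreover have "coprime K 36"
    using coprime_power_right_iff[of K 6 2] coprime_K_6 by simp
  then have "coprime 36 (K^2)"
    by (simp add: coprime_commute)
  ultimately show ?thesis
    using divides_mult by blast
qed

lemma second_exponent_dvd:
  "18 * K^2 dvd 9 * (dedekind_sum_num (3 * h) K + dedekind_sum_num (2 * h) K
                     + dedekind_sum_num h K - 3 * dedekind_sum_num (6 * h) K)
                - K * (K^2 - 1) * (9 * h + 6 * m)"
    (is "_ dvd ?T")
proof -
  define A where "A c = dedekind_sum_num (c * h) K" for c
  have D: "K^2 dvd 12 * A 1 - K * (h - 6 * m)" "K^2 dvd 12 * A 2 - K * (2 * h - 3 * m)"
    "K^2 dvd 12 * A 3 - K * (3 * h - 2 * m)" "K^2 dvd 12 * A 6 - K * (6 * h - m)"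
    using dedekind_sum_num_multiples_cong by (simp_all add: A_def)
  have "4 * ?T = 3 * ((12 * A 3 - K * (3 * h - 2 * m)) + (12 * A 2 - K * (2 * h - 3 * m))
                     + (12 * A 1 - K * (h - 6 * m)) - 3 * (12 * A 6 - K * (6 * h - m)))
                - K^2 * (4 * K * (9 * h + 6 * m))"
    by (simp add: A_def algebra_simps power2_eq_square)
  moreover have "K^2 dvd \<dots>"
    by (intro D dvd_add dvd_mult dvd_diff dvd_triv_left)
  moreover have "coprime (K^2) 4"
    using coprime_K_6 coprime_divisors[of K K 2 6] coprime_power_right_iff[of "K^2" 2 2] by simp
  ultimately have "K^2 dvd ?T"
    using coprime_dvd_mult_right_iff by (metis (no_types))
  moreover obtain u where u: "A 1 + A 2 + A 3 + A 6 = 2 * u"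
    using dedekind_sum_num_parity by (auto simp: A_def elim!: evenE simp del: even_add)
  obtain t where t: "K^2 - 1 = 24 * t"
    using square_cong_1_mod_24[OF coprime_K_6] by (elim dvdE)
  have "?T = 18 * (u - 2 * A 6 - 4 * K * t * (3 * h + 2 * m))"
    using u t by (simp add: A_def) algebra
  then have "18 dvd ?T"
    by simp
  moreover have "coprime K 18"
    using coprime_K_6 coprime_divisors[of K K 2 6] coprime_divisors[of K K 3 6]
      coprime_power_right_iff[of K 3 2] coprime_mult_right_iff[of K 2 9] by simp
  then have "coprime 18 (K^2)"
    by (simp add: coprime_commute)
  ultimately show ?thesis
    using divides_mult by blast
qed

lemma omega_quotient_first:
  "omega (6 * h) K * omega (2 * h) K * omega h K / omega (3 * h) K
     = exp (- (2 * complex_of_real pi * \<i> / (36 * of_int K)) *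
         of_int (-9 * K + 9 * K^2 + h * (-9 + 9 * K^2) + 6 * m * (2 - 2 * K^2)))"
proof -
  define s where "s c = dedekind_sum (c * h) K" for c
  define R where "R = -9 * K + 9 * K^2 + h * (-9 + 9 * K^2) + 6 * m * (2 - 2 * K^2)"
  obtain n where n: "18 * (dedekind_sum_num (6 * h) K + dedekind_sum_num (2 * h) K
                       + dedekind_sum_num h K - dedekind_sum_num (3 * h) K)
                  + K * (K^2 - 1) * (9 * h - 12 * m) = 36 * K^2 * n"
    using first_exponent_dvd by (elim dvdE)
  have "omega (6 * h) K * omega (2 * h) K * omega h K / omega (3 * h) K
      = exp (of_real pi * \<i> * of_real (s 6 + s 2 + s 1 - s 3))"
    by (simp add: omega_def s_def exp_add exp_diff ring_distribs)
  also have "\<dots> = exp (of_real pi * \<i> * of_real (- of_int R / (18 * of_int K)))"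
  proof (rule exp_pi_i_eq_if_diff_even)
    show "s 6 + s 2 + s 1 - s 3 = 2 * of_int n + (- of_int R / (18 * of_int K))"
      using arg_cong[where f = real_of_int, OF n] K_pos
      by (simp add: s_def R_def dedekind_sum_eq_num field_simps) algebra
  qed
  also have "\<dots> = exp (- (2 * complex_of_real pi * \<i> / (36 * of_int K)) * of_int R)"
    by (rule arg_cong[where f = exp]) (simp add: field_simps)
  finally show ?thesis
    unfolding R_def .
qed

lemma omega_quotient_second:
  "omega (3 * h) K * omega (2 * h) K * omega h K / omega (6 * h) K ^ 3
     = exp ((2 * complex_of_real pi * \<i> / (18 * of_int K)) *
         of_int (9 * h * (K^2 - 1) + 6 * m * (K^2 - 1)))"
proof -
  define s where "s c = dedekind_sum (c * h) K" for c
  define R where "R = 9 * h * (K^2 - 1) + 6 * m * (K^2 - 1)"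
  obtain n where n: "9 * (dedekind_sum_num (3 * h) K + dedekind_sum_num (2 * h) K
                     + dedekind_sum_num h K - 3 * dedekind_sum_num (6 * h) K)
                - K * (K^2 - 1) * (9 * h + 6 * m) = 18 * K^2 * n"
    using second_exponent_dvd by (elim dvdE)
  have "omega (3 * h) K * omega (2 * h) K * omega h K / omega (6 * h) K ^ 3
      = exp (of_real pi * \<i> * of_real (s 3 + s 2 + s 1 - 3 * s 6))"
    by (simp add: omega_def s_def exp_add exp_diff ring_distribs mult.left_commute
        flip: exp_of_nat_mult)
  also have "\<dots> = exp (of_real pi * \<i> * of_real (of_int R / (9 * of_int K)))"
  proof (rule exp_pi_i_eq_if_diff_even)
    show "s 3 + s 2 + s 1 - 3 * s 6 = 2 * of_int n + of_int R / (9 * of_int K)"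
      using arg_cong[where f = real_of_int, OF n] K_pos
      by (simp add: s_def R_def dedekind_sum_eq_num field_simps) algebra
  qed
  also have "\<dots> = exp ((2 * complex_of_real pi * \<i> / (18 * of_int K)) * of_int R)"
    by (rule arg_cong[where f = exp]) (simp add: field_simps)
  finally show ?thesis
    unfolding R_def .
qed

end

theorem lemma3p7:
  fixes k :: nat and h h' :: int
  assumes "gcd k 6 = 1"
    and "coprime h (int k)"
    and "[h * h' = -1] (mod (int k))"
    and "6 dvd h'"
  shows "(omega (6*h) (int k) * omega (2*h) (int k) * omega h (int k) / omega (3*h) (int k)
           = exp (- (2 * complex_of_real pi * \<i> / (36 * of_nat k)) *
               of_int (-9 * int k + 9 * int k^2 + h * (-9 + 9 * int k^2) + h' * (2 - 2 * int k^2))))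
         \<and> (omega (3*h) (int k) * omega (2*h) (int k) * omega h (int k) / omega (6*h) (int k) ^ 3
           = exp ((2 * complex_of_real pi * \<i> / (18 * of_nat k)) *
               of_int (9 * h * (int k^2 - 1) + h' * (int k^2 - 1))))"
proof -
  obtain m where m: "h' = 6 * m"
    using assms(4) by (elim dvdE)
  have "k \<noteq> 0"
    using assms(1) by (rule contrapos_pn) simp
  then have K_pos: "int k > 0"
    by simp
  have coprime_K_6: "coprime (int k) 6"
    using assms(1) gcd_int_int_eq[of k 6] by (simp add: coprime_iff_gcd_eq_1)
  have inverse: "[h * (6 * m) = -1] (mod int k)"
    using assms(3) m by simp
  note first = omega_quotient_first[OF K_pos coprime_K_6 assms(2) inverse]
  note second = omega_quotient_second[OF K_pos coprime_K_6 assms(2) inverse]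
  show ?thesis
    using first second unfolding m by simp
qed

end
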